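(* For an integer $n>1$ define, for every integer $1<r<n$, $$E^{BW,C}_n(r)=\frac{2r(r-1)}{n^2}\sum_{k=r+1}^{n}\frac{n-k}{(k-1)(k-2)},$$ and let $\mathcal{M}(n)$ be a value of $r$ at which $E^{BW,C}_n$ attains its maximum. Let $$\theta=-\frac{1}{2W_{-1}\!\left(-\frac{1}{2\sqrt e}\right)}=e^{\frac12+W_{-1}\left(-\frac{1}{2\sqrt e}\right)}=0.284668\dots,$$ which is the solution in $(0,1)$ of $2x\log x=x-1$. Then (i) $\lim_{n\to\infty}\mathcal{M}(n)/n=\theta$; (ii) $\lim_{n\to\infty}E^{BW,C}_n(\mathcal{M}(n))=\lim_{n\to\infty}E^{BW,C}_n(\lfloor n\theta\rfloor)=\theta(1-\theta)=0.2036321\dots$.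
   Context: $W_{-1}$ denotes the lower real branch of the Lambert $W$ function, i.e. the inverse of $z\mapsto ze^z$ on $(-\infty,-1]$, defined on $[-1/e,0)$. *)

theory Defs
  imports Complex_Main
begin

text \<open>Lower real branch of Lambert W: inverse of z * exp z on (-inf,-1], for y in [-1/e,0).\<close>
definition lambertW_m1 :: "real \<Rightarrow> real" where
  "lambertW_m1 y = (THE z. z \<le> -1 \<and> z * exp z = y)"

definition E_BWC :: "nat \<Rightarrow> nat \<Rightarrow> real" where
  "E_BWC n r = 2 * real r * (real r - 1) / (real n)^2 *
      (\<Sum>k = r+1..n. (real n - real k) / ((real k - 1) * (real k - 2)))"

definition theta :: real where
  "theta = - 1 / (2 * lambertW_m1 (- 1 / (2 * sqrt (exp 1))))"

end

theory Submission
  imports Defs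
begin

text \<open>
  Writing the summand as \<open>(n - 2) (1/(k-2) - 1/(k-1)) - 1/(k-1)\<close> telescopes the sum, and the
  remaining harmonic sum is \<open>ln (n/r) + O(1/r)\<close>. Hence \<open>E_BWC n r = E_lim (r/n) + O(1/n)\<close>
  uniformly in \<open>1 < r < n\<close>, where \<open>E_lim x = 2x(1-x) + 2x\<^sup>2 ln x\<close>. As
  \<open>E_lim' x = 2 (2x ln x - x + 1)\<close>, the function \<open>E_lim\<close> is strictly unimodal on \<open>(0,1)\<close>
  with its peak at the root \<open>\<theta>\<close> of \<open>2x ln x = x - 1\<close>, where it equals \<open>\<theta>(1-\<theta>)\<close>.
  The uniform approximation carries the peak value over to \<open>max\<^sub>r E_BWC n r\<close>, and strict
  unimodality then forces \<open>M n / n \<rightarrow> \<theta>\<close>. Substituting \<open>x = exp (1/2 + w)\<close> turns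
  \<open>2x ln x = x - 1\<close> into \<open>w e\<^sup>w = -1/(2\<surd>e)\<close>, which identifies \<open>\<theta>\<close> via \<open>W\<^sub>-\<^sub>1\<close>.
\<close>

section \<open>The lower branch of the Lambert W function\<close>

lemma mult_exp_strict_antimono:
  fixes a b :: real
  assumes "a < b" "b \<le> -1"
  shows "b * exp b < a * exp a"
proof (rule DERIV_neg_imp_decreasing_open[OF \<open>a < b\<close>])
  fix x assume "a < x" "x < b"
  have "((\<lambda>z. z * exp z) has_real_derivative (1 + x) * exp x) (at x)"
    by (auto intro!: derivative_eq_intros simp: algebra_simps)
  moreover have "(1 + x) * exp x < 0"
    using \<open>x < b\<close> assms by (intro mult_neg_pos) auto
  ultimately show "\<exists>y. ((\<lambda>z. z * exp z) has_real_derivative y) (at x) \<and> y < 0"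
    by blast
qed (intro continuous_intros)

lemma lambertW_m1_solves:
  assumes "- exp (-1) \<le> y" "y < 0"
  shows "lambertW_m1 y \<le> -1 \<and> lambertW_m1 y * exp (lambertW_m1 y) = y"
proof -
  have "eventually (\<lambda>x. x ^ 1 / exp x < - y) at_top"
    using order_tendstoD(2)[OF tendsto_power_div_exp_0, of "- y" 1] \<open>y < 0\<close> by simp
  then obtain x0 where x0: "\<And>x. x0 \<le> x \<Longrightarrow> x / exp x < - y"
    by (auto simp: eventually_at_top_linorder)
  define z where "z = - max x0 1"
  have "- z / exp (- z) < - y"
    unfolding z_def by (rule x0) simp
  then have z: "z \<le> -1" "y \<le> z * exp z"
    unfolding z_def by (auto simp: exp_minus field_simps)
  obtain w where w: "w \<le> -1" "w * exp w = y"
    using IVT2'[of "\<lambda>z. z * exp z" "-1" y z] z assms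
    by (force simp: exp_minus field_simps intro: continuous_intros)
  have "lambertW_m1 y = w"
    unfolding lambertW_m1_def
  proof (rule the_equality)
    fix v assume "v \<le> -1 \<and> v * exp v = y"
    then show "v = w"
      using w mult_exp_strict_antimono[of v w] mult_exp_strict_antimono[of w v]
      by (cases v w rule: linorder_cases) auto
  qed (use w in simp)
  with w show ?thesis by simp
qed

section \<open>The constant \<open>\<theta>\<close>\<close>

lemma sqrt_exp_1: "sqrt (exp 1) = exp (1 / 2 :: real)"
proof -
  have "exp 1 = (exp (1 / 2 :: real))\<^sup>2"
    by (simp add: power2_eq_square flip: exp_add)
  then show ?thesis by simp
qed

lemma theta_lambertW_m1:
  obtains w where "w = lambertW_m1 (- 1 / (2 * sqrt (exp 1)))" "theta = - 1 / (2 * w)"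
    "w \<le> -1" "w * exp w = - 1 / (2 * exp (1 / 2))"
proof -
  have "exp 1 = exp (1 / 2) * exp (1 / 2 :: real)"
    by (simp flip: exp_add)
  also have "\<dots> \<le> 2 * exp (1 / 2)"
    using exp_half_le2 by (intro mult_right_mono) auto
  finally have "exp 1 \<le> 2 * exp (1 / 2 :: real)" .
  then have "- exp (-1) \<le> - 1 / (2 * exp (1 / 2 :: real))"
    by (simp add: exp_minus field_simps)
  then show ?thesis
    using that lambertW_m1_solves[of "- 1 / (2 * exp (1 / 2))"] by (simp add: theta_def sqrt_exp_1)
qed

lemma theta_pos: "0 < theta"
  and theta_le_half: "theta \<le> 1 / 2"
proof -
  obtain w where w: "theta = - 1 / (2 * w)" "w \<le> -1"
    using theta_lambertW_m1 by metis
  show "0 < theta"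
    unfolding w(1) by (rule divide_neg_neg) (use w(2) in auto)
  have "- 1 / (2 * w) \<le> 1 / 2"
    using w(2) by (simp add: field_simps)
  with w(1) show "theta \<le> 1 / 2"
    by simp
qed

lemma theta_less_1: "theta < 1"
  using theta_le_half by simp

lemma theta_eq_exp: "theta = exp (1 / 2 + lambertW_m1 (- 1 / (2 * sqrt (exp 1))))"
proof (rule theta_lambertW_m1)
  fix w assume w: "w = lambertW_m1 (- 1 / (2 * sqrt (exp 1)))" "theta = - 1 / (2 * w)"
    "w \<le> -1" "w * exp w = - 1 / (2 * exp (1 / 2))"
  then have "exp w = - 1 / (2 * exp (1 / 2) * w)"
    by (simp add: field_simps)
  then show ?thesis
    using w by (simp add: exp_add)
qed

lemma theta_root: "2 * theta * ln theta = theta - 1"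
proof (rule theta_lambertW_m1)
  fix w assume w: "w = lambertW_m1 (- 1 / (2 * sqrt (exp 1)))" "theta = - 1 / (2 * w)"
    "w \<le> -1" "w * exp w = - 1 / (2 * exp (1 / 2))"
  have "ln theta = 1 / 2 + w"
    using w(1) by (simp add: theta_eq_exp)
  then show ?thesis
    using w(2,3) by (simp add: field_simps)
qed

definition theta_eqn :: "real \<Rightarrow> real" where
  "theta_eqn x = 2 * x * ln x - x + 1"

lemma has_real_derivative_theta_eqn:
  "0 < x \<Longrightarrow> (theta_eqn has_real_derivative 2 * ln x + 1) (at x)"
  unfolding theta_eqn_def by (auto intro!: derivative_eq_intros)

lemma continuous_on_theta_eqn: "0 < a \<Longrightarrow> continuous_on {a..b} theta_eqn"
  unfolding theta_eqn_def by (intro continuous_intros) auto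

lemma theta_eqn_strict_antimono:
  assumes "0 < a" "a < b" "b \<le> exp (- 1 / 2)"
  shows "theta_eqn b < theta_eqn a"
proof (rule DERIV_neg_imp_decreasing_open[OF \<open>a < b\<close> _ continuous_on_theta_eqn[OF \<open>0 < a\<close>]])
  fix x assume x: "a < x" "x < b"
  then have "ln x < ln (exp (- 1 / 2))"
    using assms by (subst ln_less_cancel_iff) auto
  with x assms show "\<exists>y. (theta_eqn has_real_derivative y) (at x) \<and> y < 0"
    by (intro exI[of _ "2 * ln x + 1"]) (simp add: has_real_derivative_theta_eqn)
qed

lemma theta_eqn_strict_mono:
  assumes "exp (- 1 / 2) \<le> a" "a < b"
  shows "theta_eqn a < theta_eqn b"
proof -
  have "0 < a"
    using assms(1) exp_gt_zero[of "- 1 / 2"] by linarith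
  show ?thesis
  proof (rule DERIV_pos_imp_increasing_open[OF \<open>a < b\<close> _ continuous_on_theta_eqn[OF \<open>0 < a\<close>]])
    fix x assume x: "a < x" "x < b"
    then have "ln (exp (- 1 / 2)) < ln x"
      using assms \<open>0 < a\<close> by (subst ln_less_cancel_iff) auto
    with x \<open>0 < a\<close> show "\<exists>y. (theta_eqn has_real_derivative y) (at x) \<and> y > 0"
      by (intro exI[of _ "2 * ln x + 1"]) (simp add: has_real_derivative_theta_eqn)
  qed
qed

lemma theta_eqn_theta: "theta_eqn theta = 0"
  using theta_root by (simp add: theta_eqn_def)

lemma theta_le_exp_half: "theta \<le> exp (- 1 / 2)"
proof -
  have "inverse 2 \<le> inverse (exp (1 / 2 :: real))"
    using exp_half_le2 by (rule le_imp_inverse_le) simp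
  also have "\<dots> = exp (- 1 / 2)"
    by (subst exp_minus[symmetric]) simp
  finally show ?thesis
    using theta_le_half by simp
qed

lemma theta_eqn_pos: "0 < x \<Longrightarrow> x < theta \<Longrightarrow> 0 < theta_eqn x"
  using theta_eqn_strict_antimono[of x theta] theta_le_exp_half theta_eqn_theta by simp

lemma theta_eqn_neg:
  assumes "theta < x" "x < 1"
  shows "theta_eqn x < 0"
proof (cases "x \<le> exp (- 1 / 2)")
  case True
  then show ?thesis
    using theta_eqn_strict_antimono[of theta x] theta_pos theta_eqn_theta assms by simp
next
  case False
  then show ?thesis
    using theta_eqn_strict_mono[of x 1] assms by (simp add: theta_eqn_def)
qed

lemma theta_unique:
  assumes "0 < x" "x < 1" "2 * x * ln x = x - 1"
  shows "x = theta"
proof -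
  have "theta_eqn x = 0"
    using assms(3) by (simp add: theta_eqn_def)
  then show ?thesis
    using theta_eqn_pos[of x] theta_eqn_neg[of x] assms(1,2)
    by (cases x theta rule: linorder_cases) auto
qed

section \<open>The limit profile\<close>

definition E_lim :: "real \<Rightarrow> real" where
  "E_lim x = 2 * x * (1 - x) + 2 * x\<^sup>2 * ln x"

lemma has_real_derivative_E_lim:
  "0 < x \<Longrightarrow> (E_lim has_real_derivative 2 * theta_eqn x) (at x)"
  unfolding E_lim_def theta_eqn_def
  by (auto intro!: derivative_eq_intros simp: algebra_simps power2_eq_square)

lemma isCont_E_lim: "0 < x \<Longrightarrow> isCont E_lim x"
  using has_real_derivative_E_lim DERIV_isCont by blast

lemma continuous_on_E_lim: "0 < a \<Longrightarrow> continuous_on {a..b} E_lim"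
  by (intro continuous_at_imp_continuous_on ballI isCont_E_lim) auto

lemma E_lim_strict_mono:
  assumes "0 < a" "a < b" "b \<le> theta"
  shows "E_lim a < E_lim b"
proof (rule DERIV_pos_imp_increasing_open[OF \<open>a < b\<close> _ continuous_on_E_lim[OF \<open>0 < a\<close>]])
  fix x assume "a < x" "x < b"
  with assms show "\<exists>y. (E_lim has_real_derivative y) (at x) \<and> y > 0"
    by (intro exI[of _ "2 * theta_eqn x"]) (simp add: has_real_derivative_E_lim theta_eqn_pos)
qed

lemma E_lim_strict_antimono:
  assumes "theta \<le> a" "a < b" "b < 1"
  shows "E_lim b < E_lim a"
proof (rule DERIV_neg_imp_decreasing_open[OF \<open>a < b\<close> _ continuous_on_E_lim])
  show "0 < a" using assms(1) theta_pos by simp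
  fix x assume "a < x" "x < b"
  with assms theta_pos show "\<exists>y. (E_lim has_real_derivative y) (at x) \<and> y < 0"
    by (intro exI[of _ "2 * theta_eqn x"]) (simp add: has_real_derivative_E_lim theta_eqn_neg)
qed

lemma E_lim_le_E_lim_theta: "0 < x \<Longrightarrow> x < 1 \<Longrightarrow> E_lim x \<le> E_lim theta"
  using E_lim_strict_mono[of x theta] E_lim_strict_antimono[of theta x]
  by (cases x theta rule: linorder_cases) auto

lemma E_lim_theta: "E_lim theta = theta * (1 - theta)"
proof -
  have "2 * theta\<^sup>2 * ln theta = theta * (theta - 1)"
    using arg_cong[OF theta_root, of "(*) theta"] by (simp add: power2_eq_square algebra_simps)
  then show ?thesis
    unfolding E_lim_def by (simp add: algebra_simps)
qed

section \<open>Uniform approximation of \<open>E_BWC\<close> by the limit profile\<close>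

lemma sum_inverse_pred_ln_bounds:
  assumes "2 \<le> r" "r \<le> n"
  shows "ln (real n) - ln (real r) \<le> (\<Sum>k = r+1..n. 1 / (real k - 1))
    \<and> (\<Sum>k = r+1..n. 1 / (real k - 1)) \<le> ln (real n - 1) - ln (real r - 1)"
  using assms(2)
proof (induction n rule: dec_induct)
  case (step m)
  have m: "0 < real m - 1"
    using step assms by simp
  have "ln (real m + 1) - ln (real m) \<le> 1 / real m"
    using ln_le_minus_one[of "(real m + 1) / real m"] m by (simp add: ln_div field_simps)
  moreover have "1 / real m \<le> ln (real m) - ln (real m - 1)"
    using ln_le_minus_one[of "(real m - 1) / real m"] m by (simp add: ln_div field_simps)
  ultimately show ?case
    using step.IH step.hyps by (simp add: add.commute)
qed simp

lemma E_BWC_closed_form: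
  assumes "2 \<le> r" "r \<le> n"
  shows "E_BWC n r = 2 * real r * (real r - 1) / (real n)\<^sup>2 *
    ((real n - 2) * (1 / (real r - 1) - 1 / (real n - 1)) - (\<Sum>k = r+1..n. 1 / (real k - 1)))"
proof -
  have telescope: "(\<Sum>k = r+1..n. 1 / (real k - 2) - 1 / (real k - 1))
      = 1 / (real r - 1) - 1 / (real n - 1)"
  proof -
    have "(\<Sum>k = r+1..n. 1 / (real k - 2) - 1 / (real k - 1))
        = (\<Sum>k \<in> {Suc r..n}. - 1 / (real k - 1) - - 1 / (real (k - 1) - 1))"
      by (intro sum.cong) (auto simp: of_nat_diff)
    also have "\<dots> = 1 / (real r - 1) - 1 / (real n - 1)"
      using sum_telescope''[OF assms(2), of "\<lambda>k. - 1 / (real k - 1)"] by simp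
    finally show ?thesis .
  qed
  have "(\<Sum>k = r+1..n. (real n - real k) / ((real k - 1) * (real k - 2)))
      = (\<Sum>k = r+1..n. (real n - 2) * (1 / (real k - 2) - 1 / (real k - 1)) - 1 / (real k - 1))"
  proof (rule sum.cong)
    have "(m - x) / ((x - 1) * (x - 2)) = (m - 2) * (1 / (x - 2) - 1 / (x - 1)) - 1 / (x - 1)"
      if "x \<noteq> 1" "x \<noteq> 2" for m x :: real
      using that by (simp add: divide_simps)
    then show "(real n - real k) / ((real k - 1) * (real k - 2))
        = (real n - 2) * (1 / (real k - 2) - 1 / (real k - 1)) - 1 / (real k - 1)"
      if "k \<in> {r+1..n}" for k
      using that assms(1) by simp
  qed simp
  also have "\<dots> = (real n - 2) * (\<Sum>k = r+1..n. 1 / (real k - 2) - 1 / (real k - 1))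
      - (\<Sum>k = r+1..n. 1 / (real k - 1))"
    by (subst sum_subtractf) (simp only: sum_distrib_left)
  also have "\<dots> = (real n - 2) * (1 / (real r - 1) - 1 / (real n - 1))
      - (\<Sum>k = r+1..n. 1 / (real k - 1))"
    by (simp only: telescope)
  finally show ?thesis
    unfolding E_BWC_def by simp
qed

lemma closed_form_sub_E_lim:
  fixes R N D :: real
  assumes "1 < R" "R < N"
  shows "2 * R * (R - 1) / N\<^sup>2 * ((N - 2) * (1 / (R - 1) - 1 / (N - 1)) - D) - E_lim (R / N)
    = 2 * R / N\<^sup>2 * ((ln N - ln R) - (N - R) / (N - 1) - (R - 1) * (D - (ln N - ln R)))"
proof -
  define X where "X = (N - 2) * (1 / (R - 1) - 1 / (N - 1))"
  define K where "K = 2 * R / N\<^sup>2"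
  have K_factor: "2 * R * (R - 1) / N\<^sup>2 = K * (R - 1)"
    by (simp add: K_def)
  have X: "(R - 1) * X = (N - R) - (N - R) / (N - 1)"
    unfolding X_def using assms by (simp add: divide_simps) (simp add: algebra_simps)
  have E_lim: "E_lim (R / N) = K * ((N - R) - R * (ln N - ln R))"
    unfolding K_def E_lim_def using assms by (simp add: ln_div field_simps power2_eq_square)
  have "2 * R * (R - 1) / N\<^sup>2 * (X - D) - E_lim (R / N)
      = K * ((R - 1) * X) - K * ((R - 1) * D) - K * ((N - R) - R * (ln N - ln R))"
    unfolding E_lim K_factor by (simp add: algebra_simps)
  also have "\<dots> = K * ((ln N - ln R) - (N - R) / (N - 1) - (R - 1) * (D - (ln N - ln R)))"
    unfolding X by (simp add: algebra_simps)
  finally show ?thesis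
    unfolding X_def K_def .
qed

lemma closed_form_approx_E_lim:
  fixes R N D :: real
  assumes R: "2 \<le> R" and RN: "R + 1 \<le> N"
    and D: "ln N - ln R \<le> D" "D \<le> ln (N - 1) - ln (R - 1)"
  shows "\<bar>2 * R * (R - 1) / N\<^sup>2 * ((N - 2) * (1 / (R - 1) - 1 / (N - 1)) - D) - E_lim (R / N)\<bar>
    \<le> 4 / N"
proof -
  define L where "L = ln N - ln R"
  define K where "K = 2 * R / N\<^sup>2"
  have L: "0 \<le> L" "L \<le> N / R - 1"
    using ln_le_minus_one[of "N / R"] R RN by (auto simp: L_def ln_div)
  have "ln R - ln (R - 1) \<le> 1 / (R - 1)"
    using ln_le_minus_one[of "R / (R - 1)"] R by (simp add: ln_div field_simps)
  moreover have "ln (N - 1) \<le> ln N"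
    using R RN by simp
  ultimately have "D - L \<le> 1 / (R - 1)"
    using D(2) by (simp add: L_def)
  then have "(R - 1) * (D - L) \<le> (R - 1) * (1 / (R - 1))"
    using R by (intro mult_left_mono) auto
  moreover have "0 \<le> (R - 1) * (D - L)"
    using D(1) R by (simp add: L_def)
  moreover have "0 \<le> (N - R) / (N - 1)" "(N - R) / (N - 1) \<le> 1"
    using R RN by simp_all
  ultimately have bracket: "- 2 \<le> L - (N - R) / (N - 1) - (R - 1) * (D - L)"
    "L - (N - R) / (N - 1) - (R - 1) * (D - L) \<le> N / R"
    using L R by simp_all
  have "K * (- 2) \<le> K * (L - (N - R) / (N - 1) - (R - 1) * (D - L))"
    using bracket(1) R by (intro mult_left_mono) (auto simp: K_def)
  moreover have "K * (L - (N - R) / (N - 1) - (R - 1) * (D - L)) \<le> K * (N / R)"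
    using bracket(2) R by (intro mult_left_mono) (auto simp: K_def)
  moreover have "K * (N / R) \<le> 4 / N" "- (4 / N) \<le> K * (- 2)"
    using R RN by (simp_all add: K_def field_simps power2_eq_square)
  ultimately show ?thesis
    using closed_form_sub_E_lim[of R N D] R RN unfolding L_def K_def by (simp add: abs_le_iff)
qed

lemma E_BWC_approx:
  assumes "1 < r" "r < n"
  shows "\<bar>E_BWC n r - E_lim (real r / real n)\<bar> \<le> 4 / real n"
  using closed_form_approx_E_lim[of "real r" "real n" "\<Sum>k = r+1..n. 1 / (real k - 1)"]
    sum_inverse_pred_ln_bounds[of r n] E_BWC_closed_form[of r n] assms
  by simp

lemma E_BWC_sub_E_lim_tendsto_0:
  assumes "eventually (\<lambda>n. 1 < r n \<and> r n < n) sequentially"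
  shows "(\<lambda>n. E_BWC n (r n) - E_lim (real (r n) / real n)) \<longlonglongrightarrow> 0"
proof (rule tendsto_0_le[OF lim_const_over_n[of 1], where K = 4])
  show "\<forall>\<^sub>F n in sequentially. norm (E_BWC n (r n) - E_lim (real (r n) / real n))
      \<le> norm (1 / real n) * 4"
    using assms by eventually_elim (use E_BWC_approx in auto)
qed

section \<open>Asymptotics of the maximum and the maximiser\<close>

lemma floor_mult_over_tendsto:
  assumes "0 \<le> c"
  shows "(\<lambda>n. real (nat \<lfloor>real n * c\<rfloor>) / real n) \<longlonglongrightarrow> c"
proof (rule tendsto_sandwich[of "\<lambda>n. c - 1 / real n" _ _ "\<lambda>_. c"])
  have "real (nat \<lfloor>real n * c\<rfloor>) = of_int \<lfloor>real n * c\<rfloor>" for n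
    using assms by simp
  then have floor_bounds: "real n * c - 1 < real (nat \<lfloor>real n * c\<rfloor>)"
    "real (nat \<lfloor>real n * c\<rfloor>) \<le> real n * c" for n
    by simp_all
  show "\<forall>\<^sub>F n in sequentially. c - 1 / real n \<le> real (nat \<lfloor>real n * c\<rfloor>) / real n"
    using eventually_gt_at_top[of 0]
  proof eventually_elim
    case (elim n)
    have "(real n * c - 1) / real n \<le> real (nat \<lfloor>real n * c\<rfloor>) / real n"
      using floor_bounds(1)[of n] by (intro divide_right_mono) auto
    then show ?case
      using elim by (simp add: diff_divide_distrib)
  qed
  show "\<forall>\<^sub>F n in sequentially. real (nat \<lfloor>real n * c\<rfloor>) / real n \<le> c"
    using eventually_gt_at_top[of 0]
  proof eventually_elim
    case (elim n)
    then show ?case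
      using floor_bounds(2)[of n] by (simp add: pos_divide_le_eq mult.commute)
  qed
  show "(\<lambda>n. c - 1 / real n) \<longlonglongrightarrow> c"
    using tendsto_diff[OF tendsto_const lim_const_over_n[of 1]] by simp
qed simp

lemma eventually_floor_mult_in_range:
  assumes "0 < c" "c < 1"
  shows "eventually (\<lambda>n. 1 < nat \<lfloor>real n * c\<rfloor> \<and> nat \<lfloor>real n * c\<rfloor> < n) sequentially"
proof -
  obtain N :: nat where N: "2 / c < real N"
    using reals_Archimedean2 by blast
  show ?thesis
    using eventually_ge_at_top[of N]
  proof eventually_elim
    case (elim n)
    have "2 < real N * c"
      using N assms by (simp add: field_simps)
    also have "\<dots> \<le> real n * c"
      using elim assms by (intro mult_right_mono) auto
    finally have "2 < real n * c" .
    moreover have "0 < n"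
      using \<open>2 < real n * c\<close> by (cases n) auto
    then have "real n * c < real n * 1"
      using assms by (intro mult_strict_left_mono) auto
    ultimately show ?case
      by linarith
  qed
qed

lemma E_BWC_floor_tendsto:
  assumes "0 < c" "c < 1"
  shows "(\<lambda>n. E_BWC n (nat \<lfloor>real n * c\<rfloor>)) \<longlonglongrightarrow> E_lim c"
proof -
  have "(\<lambda>n. (E_BWC n (nat \<lfloor>real n * c\<rfloor>) - E_lim (real (nat \<lfloor>real n * c\<rfloor>) / real n))
      + E_lim (real (nat \<lfloor>real n * c\<rfloor>) / real n)) \<longlonglongrightarrow> 0 + E_lim c"
    using E_BWC_sub_E_lim_tendsto_0[OF eventually_floor_mult_in_range[OF assms]]
      isCont_tendsto_compose[OF isCont_E_lim floor_mult_over_tendsto] assms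
    by (intro tendsto_add) auto
  then show ?thesis
    by simp
qed

lemma tendsto_unimodal_peak:
  fixes f :: "real \<Rightarrow> real"
  assumes mono: "\<And>u v. a < u \<Longrightarrow> u < v \<Longrightarrow> v \<le> c \<Longrightarrow> f u < f v"
    and antimono: "\<And>u v. c \<le> u \<Longrightarrow> u < v \<Longrightarrow> v < b \<Longrightarrow> f v < f u"
    and range: "eventually (\<lambda>n. a < x n \<and> x n < b) F"
    and lim: "((\<lambda>n. f (x n)) \<longlongrightarrow> f c) F"
  shows "(x \<longlongrightarrow> c) F"
proof (rule tendstoI)
  fix e :: real assume "0 < e"
  have left: "eventually (\<lambda>n. a < c - e \<longrightarrow> f (c - e) < f (x n)) F"
  proof (cases "a < c - e")
    case True
    then have "f (c - e) < f c"
      using mono \<open>0 < e\<close> by simp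
    with True show ?thesis
      using order_tendstoD(1)[OF lim] by (auto elim: eventually_mono)
  qed simp
  have right: "eventually (\<lambda>n. c + e < b \<longrightarrow> f (c + e) < f (x n)) F"
  proof (cases "c + e < b")
    case True
    then have "f (c + e) < f c"
      using antimono \<open>0 < e\<close> by simp
    with True show ?thesis
      using order_tendstoD(1)[OF lim] by (auto elim: eventually_mono)
  qed simp
  show "eventually (\<lambda>n. dist (x n) c < e) F"
    using range left right
  proof eventually_elim
    case (elim n)
    have "c - e < x n"
    proof (rule ccontr)
      assume "\<not> c - e < x n"
      then have "a < c - e" "x n \<le> c - e"
        using elim by auto
      then show False
        using mono[of "x n" "c - e"] elim \<open>0 < e\<close> by (cases "x n = c - e") auto
    qed
    moreover have "x n < c + e"
    proof (rule ccontr)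
      assume "\<not> x n < c + e"
      then have "c + e < b" "c + e \<le> x n"
        using elim by auto
      then show False
        using antimono[of "c + e" "x n"] elim \<open>0 < e\<close> by (cases "x n = c + e") auto
    qed
    ultimately show ?case
      by (simp add: dist_real_def abs_less_iff)
  qed
qed

lemma E_BWC_argmax_tendsto:
  fixes M :: "nat \<Rightarrow> nat"
  assumes M_range: "\<And>n. n \<ge> 3 \<Longrightarrow> 1 < M n \<and> M n < n"
    and M_max: "\<And>n r. n \<ge> 3 \<Longrightarrow> 1 < r \<Longrightarrow> r < n \<Longrightarrow> E_BWC n r \<le> E_BWC n (M n)"
  shows "(\<lambda>n. E_BWC n (M n)) \<longlonglongrightarrow> E_lim theta"
proof (rule tendsto_sandwich)
  note theta = theta_pos theta_less_1
  show "eventually (\<lambda>n. E_BWC n (nat \<lfloor>real n * theta\<rfloor>) \<le> E_BWC n (M n)) sequentially"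
    using eventually_floor_mult_in_range[OF theta] by eventually_elim (use M_max in auto)
  show "(\<lambda>n. E_BWC n (nat \<lfloor>real n * theta\<rfloor>)) \<longlonglongrightarrow> E_lim theta"
    using E_BWC_floor_tendsto[OF theta] .
  have M_eventually: "eventually (\<lambda>n. 1 < M n \<and> M n < n) sequentially"
    using eventually_ge_at_top[of 3] by eventually_elim (rule M_range)
  show "eventually (\<lambda>n. E_BWC n (M n)
      \<le> E_lim theta + (E_BWC n (M n) - E_lim (real (M n) / real n))) sequentially"
    using M_eventually by eventually_elim (simp add: E_lim_le_E_lim_theta)
  show "(\<lambda>n. E_lim theta + (E_BWC n (M n) - E_lim (real (M n) / real n))) \<longlonglongrightarrow> E_lim theta"
    using tendsto_add[OF tendsto_const E_BWC_sub_E_lim_tendsto_0[OF M_eventually]] by simp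
qed

lemma argmax_ratio_tendsto:
  fixes M :: "nat \<Rightarrow> nat"
  assumes M_range: "\<And>n. n \<ge> 3 \<Longrightarrow> 1 < M n \<and> M n < n"
    and "\<And>n r. n \<ge> 3 \<Longrightarrow> 1 < r \<Longrightarrow> r < n \<Longrightarrow> E_BWC n r \<le> E_BWC n (M n)"
  shows "(\<lambda>n. real (M n) / real n) \<longlonglongrightarrow> theta"
proof (rule tendsto_unimodal_peak[where a = 0 and b = 1 and c = theta and f = E_lim])
  have M_eventually: "eventually (\<lambda>n. 1 < M n \<and> M n < n) sequentially"
    using eventually_ge_at_top[of 3] by eventually_elim (rule M_range)
  then show "eventually (\<lambda>n. 0 < real (M n) / real n \<and> real (M n) / real n < 1) sequentially"
    by eventually_elim auto
  have "(\<lambda>n. E_BWC n (M n) - (E_BWC n (M n) - E_lim (real (M n) / real n)))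
      \<longlonglongrightarrow> E_lim theta - 0"
    using E_BWC_argmax_tendsto[OF assms] E_BWC_sub_E_lim_tendsto_0[OF M_eventually]
    by (rule tendsto_diff)
  then show "(\<lambda>n. E_lim (real (M n) / real n)) \<longlonglongrightarrow> E_lim theta"
    by simp
qed (auto intro: E_lim_strict_mono E_lim_strict_antimono)

theorem theorem3:
  fixes M :: "nat \<Rightarrow> nat"
  assumes M_range: "\<And>n. n \<ge> 3 \<Longrightarrow> 1 < M n \<and> M n < n"
    and M_max: "\<And>n r. n \<ge> 3 \<Longrightarrow> 1 < r \<Longrightarrow> r < n \<Longrightarrow> E_BWC n r \<le> E_BWC n (M n)"
  shows "theta = exp (1/2 + lambertW_m1 (- 1 / (2 * sqrt (exp 1))))
    \<and> 0 < theta \<and> theta < 1 \<and> 2 * theta * ln theta = theta - 1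
    \<and> (\<forall>x. 0 < x \<and> x < 1 \<and> 2 * x * ln x = x - 1 \<longrightarrow> x = theta)
    \<and> ((\<lambda>n. real (M n) / real n) \<longlonglongrightarrow> theta)
    \<and> ((\<lambda>n. E_BWC n (M n)) \<longlonglongrightarrow> theta * (1 - theta))
    \<and> ((\<lambda>n. E_BWC n (nat \<lfloor>real n * theta\<rfloor>)) \<longlonglongrightarrow> theta * (1 - theta))"
  using theta_eq_exp theta_pos theta_less_1 theta_root theta_unique
    argmax_ratio_tendsto[OF assms] E_BWC_argmax_tendsto[OF assms]
    E_BWC_floor_tendsto[OF theta_pos theta_less_1]
  unfolding E_lim_theta by auto

end
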